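(* Consider a direct channel Omega implementation on a fully connected network of $n$ processes in which, in each round, each directed channel is timely independently with probability $p<1$, independently across rounds. Then the leader stability time tends to $0$ exponentially fast as $n\to\infty$. Moreover, if the leader stability time is to remain above a fixed constant $E>0$ as $n$ grows, then the channel timeliness probability $p=p_n$ must converge to $1$ exponentially fast as $n\to\infty$.
   Context: A network has $n$ processes and a directed channel from every process to every other. Time is divided into rounds; in each round every directed channel is timely with probability $p$, independently of other channels and of other rounds. In a direct channel (single-hop) Omega implementation, a process can be the leader in a round only if, in that round, it has a timely direct channel to every other process. For a fixed process $x$, let $X$ be the number $r\ge 0$ of consecutive rounds during which $x$ retains timely direct channels to all other processes before the property first fails, so that $\mathbb{P}(X=r)=q^r(1-q)$ with $q=p^{n-1}$. The leader stability time is $\mathbb{E}(X)$.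
   Formalization: In the second part, $p=p_n$ converges to 1 and eventually satisfies $p_n^{n-1}$ >= E/(1+E), in place of converging to 1 exponentially fast. Each condition added here is assumed in the paper as well or is needed for the statement above to hold. *)

theory Defs
  imports "HOL-Analysis.Analysis"
begin

text \<open>Probability that a fixed process has timely direct channels to all n-1 others in a round.\<close>
definition succ_prob :: "nat \<Rightarrow> real \<Rightarrow> real" where
  "succ_prob n p = p ^ (n - 1)"

definition leader_stability_time :: "nat \<Rightarrow> real \<Rightarrow> real" where
  "leader_stability_time n p =
     (\<Sum>r. real r * (succ_prob n p ^ r * (1 - succ_prob n p)))"

end

theory Submission
  imports Defs
begin

text \<open>A geometric variable with parameter q has mean q / (1 - q); with q = p^(n-1) this
  tends to 0 geometrically in n whenever p < 1. Conversely, a mean of at least E forces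
  q \<ge> E / (1 + E), i.e. p \<ge> (E / (1 + E)) powered by 1 / (n - 1), and these roots tend to 1.\<close>

lemma geometric_expectation_sums:
  fixes q :: real
  assumes "0 \<le> q" "q < 1"
  shows "(\<lambda>r. real r * (q ^ r * (1 - q))) sums (q / (1 - q))"
proof -
  have "(\<lambda>r. of_nat (Suc r) * q ^ r) sums (1 / (1 - q)\<^sup>2)"
    using assms by (intro geometric_deriv_sums) auto
  then have "(\<lambda>r. (q * (1 - q)) * (of_nat (Suc r) * q ^ r)) sums ((q * (1 - q)) * (1 / (1 - q)\<^sup>2))"
    by (rule sums_mult)
  moreover have "(q * (1 - q)) * (1 / (1 - q)\<^sup>2) = q / (1 - q)"
    using assms by (simp add: power2_eq_square)
  ultimately have "(\<lambda>r. real (Suc r) * (q ^ Suc r * (1 - q))) sums (q / (1 - q))"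
    by (simp add: algebra_simps)
  then show ?thesis
    using sums_Suc_iff[of "\<lambda>r. real r * (q ^ r * (1 - q))"] by simp
qed

lemma succ_prob_less_one:
  assumes "0 \<le> p" "p < 1" "n \<ge> 2"
  shows "succ_prob n p < 1"
  using assms by (simp add: succ_prob_def power_less_one_iff)

lemma leader_stability_time_closed_form:
  assumes "0 \<le> p" "p < 1" "n \<ge> 2"
  shows "leader_stability_time n p = p ^ (n - 1) / (1 - p ^ (n - 1))"
  using sums_unique[OF geometric_expectation_sums[of "succ_prob n p"]]
    succ_prob_less_one[OF assms] assms(1)
  by (simp add: leader_stability_time_def succ_prob_def)

lemma leader_stability_time_nonneg:
  assumes "0 \<le> p" "p < 1" "n \<ge> 2"
  shows "0 \<le> leader_stability_time n p"
  using leader_stability_time_closed_form[OF assms] succ_prob_less_one[OF assms] assms(1)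
  by (simp add: succ_prob_def)

lemma leader_stability_time_le:
  assumes "0 \<le> p" "p < 1" "n \<ge> 2"
  shows "leader_stability_time n p \<le> p ^ (n - 1) / (1 - p)"
proof -
  have "p ^ (n - 1) \<le> p"
    using power_decreasing[of 1 "n - 1" p] assms by simp
  then show ?thesis
    unfolding leader_stability_time_closed_form[OF assms]
    using assms by (intro divide_left_mono) auto
qed

lemma leader_stability_time_exponential_bound:
  assumes "0 \<le> p" "p < 1"
  shows "\<exists>C r. 0 < C \<and> 0 \<le> r \<and> r < 1 \<and>
           (\<forall>n\<ge>2. leader_stability_time n p \<le> C * r ^ n)"
proof -
  define r where "r = (1 + p) / 2"
  have r: "p \<le> r" "0 < r" "r < 1"
    using assms by (auto simp: r_def)
  have "leader_stability_time n p \<le> 1 / (r * (1 - p)) * r ^ n" if n: "n \<ge> 2" for n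
  proof -
    have "leader_stability_time n p \<le> p ^ (n - 1) / (1 - p)"
      by (rule leader_stability_time_le[OF assms n])
    also have "\<dots> \<le> r ^ (n - 1) / (1 - p)"
      using r assms by (intro divide_right_mono power_mono) auto
    also have "r ^ (n - 1) = r ^ n / r"
      using n r by (simp add: power_diff)
    finally show ?thesis
      by simp
  qed
  moreover have "0 < 1 / (r * (1 - p))"
    using r assms by simp
  ultimately show ?thesis
    using r by (intro exI[of _ "1 / (r * (1 - p))"] exI[of _ r]) auto
qed

lemma leader_stability_time_tendsto_zero:
  assumes "0 \<le> p" "p < 1"
  shows "(\<lambda>n. leader_stability_time n p) \<longlonglongrightarrow> 0"
proof -
  obtain C r where r: "0 \<le> r" "r < 1"
    and bound: "\<forall>n\<ge>2. leader_stability_time n p \<le> C * r ^ n"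
    using leader_stability_time_exponential_bound[OF assms] by blast
  have lower: "\<forall>\<^sub>F n in sequentially. 0 \<le> leader_stability_time n p"
    using leader_stability_time_nonneg[OF assms] by (rule eventually_sequentiallyI)
  have upper: "\<forall>\<^sub>F n in sequentially. leader_stability_time n p \<le> C * r ^ n"
    using bound by (intro eventually_sequentiallyI) blast
  have "(\<lambda>n. C * r ^ n) \<longlonglongrightarrow> 0"
    using r by (intro tendsto_mult_right_zero LIMSEQ_power_zero) simp
  then show ?thesis
    by (rule tendsto_sandwich[OF lower upper tendsto_const])
qed

lemma leader_stability_time_ge_imp_power_ge:
  assumes "0 \<le> p" "p < 1" "n \<ge> 2" "0 \<le> E" "E \<le> leader_stability_time n p"
  shows "E / (1 + E) \<le> p ^ (n - 1)"
proof -
  define q where "q = p ^ (n - 1)"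
  have "q < 1"
    using succ_prob_less_one[OF assms(1-3)] by (simp add: q_def succ_prob_def)
  moreover have "E \<le> q / (1 - q)"
    using assms(5) leader_stability_time_closed_form[OF assms(1-3)] by (simp add: q_def)
  ultimately have "E * (1 - q) \<le> q"
    by (simp add: field_simps)
  then show ?thesis
    using assms(4) by (simp add: q_def field_simps)
qed

lemma tendsto_one_of_power_lower_bound:
  fixes x :: "nat \<Rightarrow> real"
  assumes "\<And>n. 0 \<le> x n" "\<And>n. x n \<le> 1" "0 < c"
    and "\<forall>\<^sub>F n in sequentially. c \<le> x n ^ (n - 1)"
  shows "x \<longlonglongrightarrow> 1"
proof (rule tendsto_sandwich[OF _ _ _ tendsto_const])
  show "(\<lambda>n. root (n - 1) c) \<longlonglongrightarrow> 1"
    by (rule filterlim_compose[OF LIMSEQ_root_const[OF \<open>0 < c\<close>] filterlim_minus_const_nat_at_top])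
  show "\<forall>\<^sub>F n in sequentially. x n \<le> 1"
    using assms(2) by simp
  show "\<forall>\<^sub>F n in sequentially. root (n - 1) c \<le> x n"
    using assms(4)
  proof eventually_elim
    case (elim n)
    show ?case
    proof (cases "n - 1 = 0")
      case False
      then have "root (n - 1) c \<le> root (n - 1) (x n ^ (n - 1))"
        using elim assms(3) by (intro real_root_le_mono) auto
      also have "\<dots> = x n"
        using False assms(1) real_root_power_cancel[of "n - 1" "x n"] by simp
      finally show ?thesis .
    qed (simp add: assms(1))
  qed
qed

theorem theorem3:
  shows "(\<forall>p::real. 0 \<le> p \<and> p < 1 \<longrightarrow>
            ((\<lambda>n. leader_stability_time n p) \<longlonglongrightarrow> 0) \<and>
            (\<exists>C r. 0 < C \<and> 0 \<le> r \<and> r < 1 \<and>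
               (\<forall>n\<ge>2. leader_stability_time n p \<le> C * r ^ n)))
       \<and> (\<forall>(pn :: nat \<Rightarrow> real) (E :: real).
            (\<forall>n. 0 \<le> pn n \<and> pn n < 1) \<and> 0 < E \<and>
            (\<forall>\<^sub>F n in sequentially. E \<le> leader_stability_time n (pn n))
            \<longrightarrow> (pn \<longlonglongrightarrow> 1) \<and>
                (\<forall>\<^sub>F n in sequentially. E / (1 + E) \<le> pn n ^ (n - 1)))"
proof (intro conjI allI impI)
  fix p :: real
  assume "0 \<le> p \<and> p < 1"
  then have p: "0 \<le> p" "p < 1"
    by auto
  show "(\<lambda>n. leader_stability_time n p) \<longlonglongrightarrow> 0"
    by (rule leader_stability_time_tendsto_zero[OF p])
  show "\<exists>C r. 0 < C \<and> 0 \<le> r \<and> r < 1 \<and> (\<forall>n\<ge>2. leader_stability_time n p \<le> C * r ^ n)"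
    by (rule leader_stability_time_exponential_bound[OF p])
next
  fix pn :: "nat \<Rightarrow> real" and E :: real
  assume "(\<forall>n. 0 \<le> pn n \<and> pn n < 1) \<and> 0 < E \<and>
    (\<forall>\<^sub>F n in sequentially. E \<le> leader_stability_time n (pn n))"
  then have pn: "\<And>n. 0 \<le> pn n" "\<And>n. pn n < 1" and "0 < E"
    and large: "\<forall>\<^sub>F n in sequentially. E \<le> leader_stability_time n (pn n)"
    by auto
  show lower: "\<forall>\<^sub>F n in sequentially. E / (1 + E) \<le> pn n ^ (n - 1)"
    using large eventually_ge_at_top[of "2::nat"]
    by eventually_elim (use leader_stability_time_ge_imp_power_ge pn \<open>0 < E\<close> in simp)
  show "pn \<longlonglongrightarrow> 1"
    using pn \<open>0 < E\<close> by (intro tendsto_one_of_power_lower_bound[OF _ _ _ lower]) (auto simp: less_imp_le)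
qed

end
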